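(* For integers $p,q\ge 3$ with $p\mid q$, let $u_{q,p}:\mathbf{mGT}_q\to\mathbf{mGT}_p$ be the homomorphism sending $g\in\mathbf{mGT}_q$ to the unique permutation $u_{q,p}(g)$ of $\mathbb{Z}/p\mathbb{Z}$ satisfying $t_{q,p}\circ g=u_{q,p}(g)\circ t_{q,p}$, where $t_{q,p}:\mathbb{Z}/q\mathbb{Z}\to\mathbb{Z}/p\mathbb{Z}$ is reduction mod $p$. Then the groups $\mathbf{mGT}_q$ ($q\ge3$) together with the homomorphisms $u_{q,p}$ (for $p\mid q$) form a projective system indexed by the integers $\ge 3$ ordered by divisibility, and hence there exists a well-defined group $\mathbf{mGT}=\varprojlim_q \mathbf{mGT}_q$, the projective limit of the groups $\mathbf{mGT}_q$ with respect to the homomorphisms $u_{q,p}$.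
   Context: For an integer $q\ge 3$, $\mathbf{mGT}_q$ is the subgroup of the group of permutations of $\mathbb{Z}/q\mathbb{Z}$ generated by the multiplications $a\mapsto da$ for $d\in(\mathbb{Z}/q\mathbb{Z})^*$ (residues coprime to $q$) and the involution $\theta_q:a\mapsto 1-a$. The group $\mathbf{mGT}$ is called by the paper the modified profinite Grothendieck–Teichmüller group. *)

theory Defs
  imports "HOL-Algebra.Algebra" "HOL-Number_Theory.Number_Theory"
begin

text \<open>Z/qZ is modelled by the residues {..<q} (natural numbers); permutations of
  Z/qZ are the elements of Bij {..<q} (extensional bijections), forming BijGroup.\<close>

definition mult_map :: "nat \<Rightarrow> nat \<Rightarrow> (nat \<Rightarrow> nat)" where
  "mult_map q d = (\<lambda>a\<in>{..<q}. (d * a) mod q)"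

definition theta :: "nat \<Rightarrow> (nat \<Rightarrow> nat)" where
  "theta q = (\<lambda>a\<in>{..<q}. (q + 1 - a) mod q)"

definition mGT_gens :: "nat \<Rightarrow> (nat \<Rightarrow> nat) set" where
  "mGT_gens q = {mult_map q d | d. d < q \<and> coprime d q} \<union> {theta q}"

definition mGT :: "nat \<Rightarrow> (nat \<Rightarrow> nat) monoid" where
  "mGT q = (BijGroup {..<q}) \<lparr> carrier := generate (BijGroup {..<q}) (mGT_gens q) \<rparr>"

definition u :: "nat \<Rightarrow> nat \<Rightarrow> (nat \<Rightarrow> nat) \<Rightarrow> (nat \<Rightarrow> nat)" where
  "u q p g = (THE h. h \<in> Bij {..<p} \<and> (\<forall>a<q. g a mod p = h (a mod p)))"

definition mGT_lim_carrier :: "(nat \<Rightarrow> (nat \<Rightarrow> nat)) set" where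
  "mGT_lim_carrier = {f. (\<forall>q. 3 \<le> q \<longrightarrow> f q \<in> carrier (mGT q))
                      \<and> (\<forall>q p. 3 \<le> p \<and> 3 \<le> q \<and> p dvd q \<longrightarrow> u q p (f q) = f p)
                      \<and> (\<forall>q. q < 3 \<longrightarrow> f q = undefined)}"

definition mGT_lim :: "(nat \<Rightarrow> (nat \<Rightarrow> nat)) monoid" where
  "mGT_lim = \<lparr> carrier = mGT_lim_carrier,
              monoid.mult = (\<lambda>f g q. if 3 \<le> q then f q \<otimes>\<^bsub>mGT q\<^esub> g q else undefined),
              one = (\<lambda>q. if 3 \<le> q then \<one>\<^bsub>mGT q\<^esub> else undefined) \<rparr>"

end

theory Submission
  imports Defs
begin

text \<open>Both kinds of generators of mGT_q descend along reduction mod p (for p dividing q):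
  multiplication by d induces multiplication by d mod p, and a \<mapsto> 1 - a induces the same map
  mod p. The permutations of Z/qZ that descend form a subgroup, on which passing to the
  induced permutation of Z/pZ is a homomorphism; as it sends generators of mGT_q to generators
  of mGT_p, it maps mGT_q into mGT_p, and it is u_{q,p}. Functoriality is the identity
  (x mod p) mod r = x mod r, and the projective limit is the subgroup of the product of the
  mGT_q cut out by the compatibility equations, which is a subgroup because the u_{q,p} are
  homomorphisms.\<close>

text \<open>Since a mod p < p \<le> q, mod_compatible q p g says exactly that g maps residue classes
  mod p into residue classes mod p, i.e. that g descends along reduction mod p.\<close>
definition mod_compatible :: "nat \<Rightarrow> nat \<Rightarrow> (nat \<Rightarrow> nat) \<Rightarrow> bool" where
  "mod_compatible q p g \<longleftrightarrow> (\<forall>a<q. g a mod p = g (a mod p) mod p)"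

definition compatible_perms :: "nat \<Rightarrow> nat \<Rightarrow> (nat \<Rightarrow> nat) set" where
  "compatible_perms q p = {g \<in> Bij {..<q}. mod_compatible q p g}"

definition induced_perm :: "nat \<Rightarrow> (nat \<Rightarrow> nat) \<Rightarrow> nat \<Rightarrow> nat" where
  "induced_perm p g = (\<lambda>b\<in>{..<p}. g b mod p)"

lemma mult_BijGroup: "f \<in> Bij S \<Longrightarrow> g \<in> Bij S \<Longrightarrow> f \<otimes>\<^bsub>BijGroup S\<^esub> g = compose S f g"
  by (simp add: BijGroup_def)

lemma Bij_lessThan_less: "g \<in> Bij {..<q} \<Longrightarrow> a < q \<Longrightarrow> g a < q"
  using Bij_imp_funcset by fastforce

lemma induced_perm_Bij:
  assumes g: "g \<in> compatible_perms q p" and p: "0 < p" "p \<le> q"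
  shows "induced_perm p g \<in> Bij {..<p}"
proof -
  have bij: "bij_betw g {..<q} {..<q}" and comp: "mod_compatible q p g"
    using g by (simp_all add: compatible_perms_def Bij_def)
  have "{..<p} \<subseteq> induced_perm p g ` {..<p}"
  proof
    fix c assume c: "c \<in> {..<p}"
    then obtain a where a: "a < q" "g a = c"
      using bij p by (metis bij_betw_imp_surj_on imageE lessThan_iff order_less_le_trans)
    then have "induced_perm p g (a mod p) = c"
      using comp c p by (auto simp: induced_perm_def mod_compatible_def)
    then show "c \<in> induced_perm p g ` {..<p}"
      using p by (metis imageI lessThan_iff mod_less_divisor)
  qed
  moreover have "induced_perm p g ` {..<p} \<subseteq> {..<p}"
    using p by (auto simp: induced_perm_def)
  ultimately have img: "induced_perm p g ` {..<p} = {..<p}" by blast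
  then have "inj_on (induced_perm p g) {..<p}"
    by (intro eq_card_imp_inj_on) auto
  with img show ?thesis by (simp add: Bij_def bij_betw_def induced_perm_def)
qed

lemma induced_perm_unique:
  assumes g: "g \<in> compatible_perms q p" and p: "0 < p" "p \<le> q"
  shows "h \<in> Bij {..<p} \<and> (\<forall>a<q. g a mod p = h (a mod p)) \<longleftrightarrow> h = induced_perm p g"
proof
  assume h: "h \<in> Bij {..<p} \<and> (\<forall>a<q. g a mod p = h (a mod p))"
  show "h = induced_perm p g"
  proof
    fix b show "h b = induced_perm p g b"
      using h p by (cases "b < p") (force simp: induced_perm_def Bij_def extensional_def)+
  qed
next
  assume "h = induced_perm p g"
  then show "h \<in> Bij {..<p} \<and> (\<forall>a<q. g a mod p = h (a mod p))"
    using induced_perm_Bij[OF assms] g p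
    by (auto simp: induced_perm_def compatible_perms_def mod_compatible_def)
qed

lemma u_eq_induced_perm:
  assumes "g \<in> compatible_perms q p" "0 < p" "p \<le> q"
  shows "u q p g = induced_perm p g"
    and "\<exists>!h. h \<in> Bij {..<p} \<and> (\<forall>a<q. g a mod p = h (a mod p))"
  using induced_perm_unique[OF assms] by (auto simp: u_def)

lemma induced_perm_self: "g \<in> Bij {..<q} \<Longrightarrow> induced_perm q g = g"
  by (auto simp: induced_perm_def Bij_lessThan_less Bij_def extensional_def)

lemma induced_perm_induced_perm:
  assumes "r dvd p" "0 < p"
  shows "induced_perm r (induced_perm p g) = induced_perm r g"
proof -
  have "r \<le> p" using assms by (simp add: dvd_imp_le)
  then show ?thesis
    using assms by (auto simp: induced_perm_def mod_mod_cancel)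
qed

lemma mod_compatible_compose:
  assumes f: "f \<in> compatible_perms q p" and g: "g \<in> compatible_perms q p" and p: "0 < p" "p \<le> q"
  shows "mod_compatible q p (compose {..<q} f g)"
  unfolding mod_compatible_def
proof (intro allI impI)
  fix a assume a: "a < q"
  have am: "a mod p < q" using p by (meson order_less_le_trans mod_less_divisor)
  have gB: "g \<in> Bij {..<q}" using g by (simp add: compatible_perms_def)
  have "f (g a) mod p = f (g a mod p) mod p"
    using f a gB by (simp add: compatible_perms_def mod_compatible_def Bij_lessThan_less)
  also have "\<dots> = f (g (a mod p) mod p) mod p"
    using g a by (simp add: compatible_perms_def mod_compatible_def)
  also have "\<dots> = f (g (a mod p)) mod p"
    using f am gB by (simp add: compatible_perms_def mod_compatible_def Bij_lessThan_less)
  finally show "compose {..<q} f g a mod p = compose {..<q} f g (a mod p) mod p"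
    using a am by (simp add: compose_def)
qed

text \<open>The preimages of a and of a mod p under g have the same image under the induced
  permutation, which is injective; hence they agree mod p.\<close>
lemma mod_compatible_inv:
  assumes g: "g \<in> compatible_perms q p" and p: "0 < p" "p \<le> q"
  shows "mod_compatible q p (inv\<^bsub>BijGroup {..<q}\<^esub> g)"
  unfolding mod_compatible_def
proof (intro allI impI)
  fix a assume a: "a < q"
  have gB: "g \<in> Bij {..<q}" and comp: "mod_compatible q p g"
    using g by (simp_all add: compatible_perms_def)
  have bij: "bij_betw g {..<q} {..<q}" using gB by (simp add: Bij_def)
  have inj: "inj_on (induced_perm p g) {..<p}"
    using induced_perm_Bij[OF assms] by (simp add: Bij_def bij_betw_def)
  have am: "a mod p < q" using p by (meson order_less_le_trans mod_less_divisor)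
  define x where "x = inv_into {..<q} g a"
  define y where "y = inv_into {..<q} g (a mod p)"
  have x: "x < q" "g x = a" using a bij unfolding x_def
    by (metis bij_betw_imp_surj_on f_inv_into_f inv_into_into lessThan_iff)+
  have y: "y < q" "g y = a mod p" using am bij unfolding y_def
    by (metis bij_betw_imp_surj_on f_inv_into_f inv_into_into lessThan_iff)+
  have "induced_perm p g (x mod p) = a mod p"
    using x comp p unfolding induced_perm_def mod_compatible_def
    by (metis lessThan_iff mod_less_divisor restrict_apply')
  moreover have "induced_perm p g (y mod p) = a mod p"
    using y comp p unfolding induced_perm_def mod_compatible_def
    by (metis lessThan_iff mod_less_divisor mod_mod_trivial restrict_apply')
  ultimately have "x mod p = y mod p"
    using inj p by (auto simp: inj_on_def)
  then show "(inv\<^bsub>BijGroup {..<q}\<^esub> g) a mod p = (inv\<^bsub>BijGroup {..<q}\<^esub> g) (a mod p) mod p"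
    using a am gB by (simp add: inv_BijGroup x_def y_def)
qed

lemma subgroup_compatible_perms:
  assumes "0 < p" "p \<le> q"
  shows "subgroup (compatible_perms q p) (BijGroup {..<q})"
proof (rule group.subgroupI[OF group_BijGroup])
  show "compatible_perms q p \<subseteq> carrier (BijGroup {..<q})"
    by (auto simp: compatible_perms_def BijGroup_def)
  have "(\<lambda>x\<in>{..<q}. x) \<in> compatible_perms q p"
    using assms by (auto simp: compatible_perms_def mod_compatible_def id_Bij
        intro: order_less_le_trans[OF mod_less_divisor])
  then show "compatible_perms q p \<noteq> {}" by blast
next
  fix g assume "g \<in> compatible_perms q p"
  then show "inv\<^bsub>BijGroup {..<q}\<^esub> g \<in> compatible_perms q p"
    using mod_compatible_inv[OF _ assms] group.inv_closed[OF group_BijGroup]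
    by (auto simp: compatible_perms_def BijGroup_def)
next
  fix f g assume "f \<in> compatible_perms q p" "g \<in> compatible_perms q p"
  then show "f \<otimes>\<^bsub>BijGroup {..<q}\<^esub> g \<in> compatible_perms q p"
    using mod_compatible_compose[OF _ _ assms]
    by (auto simp: compatible_perms_def mult_BijGroup compose_Bij)
qed

lemma induced_perm_compose:
  assumes f: "f \<in> compatible_perms q p" and g: "g \<in> Bij {..<q}" and p: "0 < p" "p \<le> q"
  shows "induced_perm p (compose {..<q} f g) = compose {..<p} (induced_perm p f) (induced_perm p g)"
proof
  fix b
  show "induced_perm p (compose {..<q} f g) b
      = compose {..<p} (induced_perm p f) (induced_perm p g) b"
    using f g p Bij_lessThan_less[OF g, of b]
    by (cases "b < p")
      (simp_all add: induced_perm_def compose_def compatible_perms_def mod_compatible_def)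
qed

lemma induced_perm_hom:
  assumes "0 < p" "p \<le> q"
  shows "induced_perm p \<in> hom ((BijGroup {..<q})\<lparr>carrier := compatible_perms q p\<rparr>) (BijGroup {..<p})"
proof (rule homI)
  fix g assume "g \<in> carrier ((BijGroup {..<q})\<lparr>carrier := compatible_perms q p\<rparr>)"
  then show "induced_perm p g \<in> carrier (BijGroup {..<p})"
    using induced_perm_Bij[OF _ assms] by (simp add: BijGroup_def)
next
  fix f g assume "f \<in> carrier ((BijGroup {..<q})\<lparr>carrier := compatible_perms q p\<rparr>)"
    "g \<in> carrier ((BijGroup {..<q})\<lparr>carrier := compatible_perms q p\<rparr>)"
  then show "induced_perm p (f \<otimes>\<^bsub>(BijGroup {..<q})\<lparr>carrier := compatible_perms q p\<rparr>\<^esub> g) =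
      induced_perm p f \<otimes>\<^bsub>BijGroup {..<p}\<^esub> induced_perm p g"
    using induced_perm_Bij[OF _ assms] induced_perm_compose[OF _ _ assms]
    by (simp add: compatible_perms_def mult_BijGroup)
qed

lemma mult_map_Bij:
  assumes "0 < q" "coprime d q"
  shows "mult_map q d \<in> Bij {..<q}"
proof -
  have inj: "inj_on (mult_map q d) {..<q}"
  proof (rule inj_onI)
    fix a b assume ab: "a \<in> {..<q}" "b \<in> {..<q}" "mult_map q d a = mult_map q d b"
    then have "[d * a = d * b] (mod q)" by (simp add: mult_map_def cong_def)
    then have "[a = b] (mod q)" using assms(2) by (simp add: cong_mult_lcancel_nat)
    then show "a = b" using ab by (simp add: cong_def)
  qed
  have "mult_map q d ` {..<q} \<subseteq> {..<q}" using assms by (auto simp: mult_map_def)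
  with inj have "mult_map q d ` {..<q} = {..<q}" by (intro endo_inj_surj) simp_all
  with inj show ?thesis by (simp add: Bij_def bij_betw_def mult_map_def)
qed

lemma theta_theta: "a < q \<Longrightarrow> theta q (theta q a) = a"
  by (cases "a \<le> 1") (auto simp: theta_def mod_if)

lemma theta_Bij: "0 < q \<Longrightarrow> theta q \<in> Bij {..<q}"
proof -
  assume "0 < q"
  then have "theta q ` {..<q} \<subseteq> {..<q}" by (auto simp: theta_def)
  moreover have inj: "inj_on (theta q) {..<q}"
    by (rule inj_on_inverseI[of _ "theta q"]) (simp add: theta_theta)
  ultimately have "theta q ` {..<q} = {..<q}" by (intro endo_inj_surj) simp_all
  with inj show ?thesis by (simp add: Bij_def bij_betw_def theta_def)
qed

lemma mod_compatible_mult_map: "p dvd q \<Longrightarrow> mod_compatible q p (mult_map q d)"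
  by (auto simp: mod_compatible_def mult_map_def mod_mod_cancel mod_mult_right_eq
      intro: le_less_trans[OF mod_less_eq_dividend])

lemma mod_compatible_theta:
  assumes "p dvd q" "0 < p"
  shows "mod_compatible q p (theta q)"
  unfolding mod_compatible_def
proof (intro allI impI)
  fix a assume a: "a < q"
  have am: "a mod p < q" using a by (meson le_less_trans mod_less_eq_dividend)
  have "[q + 1 - a = q + 1 - a mod p] (mod p)"
    using a by (intro cong_diff_nat) (auto simp: cong_def intro: le_trans[OF mod_less_eq_dividend])
  then show "theta q a mod p = theta q (a mod p) mod p"
    using a am assms(1) by (simp add: theta_def mod_mod_cancel cong_def)
qed

lemma induced_perm_mult_map:
  assumes "p dvd q" "0 < q"
  shows "induced_perm p (mult_map q d) = mult_map p (d mod p)"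
proof -
  have "p \<le> q" using assms by (simp add: dvd_imp_le)
  then show ?thesis
    using assms(1)
    by (auto simp: induced_perm_def mult_map_def mod_mod_cancel mod_mult_left_eq)
qed

lemma induced_perm_theta:
  assumes "p dvd q" "0 < q"
  shows "induced_perm p (theta q) = theta p"
proof
  fix b
  show "induced_perm p (theta q) b = theta p b"
  proof (cases "b < p")
    case True
    have "p \<le> q" using assms by (simp add: dvd_imp_le)
    moreover obtain m where "q = p * m" using assms(1) by blast
    ultimately have "q + 1 - b = (p + 1 - b) + p * (m - 1)"
      using True by (simp add: diff_mult_distrib2)
    then have "(q + 1 - b) mod p = (p + 1 - b) mod p" by simp
    then show ?thesis
      using True \<open>p \<le> q\<close> assms(1) by (simp add: induced_perm_def theta_def mod_mod_cancel)
  qed (simp add: induced_perm_def theta_def)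
qed

lemma mGT_gens_subset_compatible_perms:
  assumes "p dvd q" "0 < p" "0 < q"
  shows "mGT_gens q \<subseteq> compatible_perms q p"
  using assms mult_map_Bij theta_Bij mod_compatible_mult_map mod_compatible_theta
  by (auto simp: mGT_gens_def compatible_perms_def)

lemma induced_perm_mGT_gens:
  assumes "p dvd q" "0 < p" "0 < q"
  shows "induced_perm p ` mGT_gens q \<subseteq> mGT_gens p"
proof -
  have "coprime (d mod p) p" if "coprime d q" for d
    using that assms(1,2)
    by (metis coprime_commute coprime_mod_right_iff coprime_divisors dvd_refl neq0_conv)
  then show ?thesis
    using assms by (auto simp: mGT_gens_def induced_perm_mult_map induced_perm_theta)
qed

lemma carrier_mGT: "carrier (mGT q) = generate (BijGroup {..<q}) (mGT_gens q)"
  by (simp add: mGT_def)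

lemma mult_mGT: "f \<otimes>\<^bsub>mGT q\<^esub> g = f \<otimes>\<^bsub>BijGroup {..<q}\<^esub> g"
  by (simp add: mGT_def)

lemma mGT_subset_compatible_perms:
  assumes "p dvd q" "0 < p" "0 < q"
  shows "carrier (mGT q) \<subseteq> compatible_perms q p"
  unfolding carrier_mGT
  using assms by (intro group.generate_subgroup_incl[OF group_BijGroup]
      mGT_gens_subset_compatible_perms subgroup_compatible_perms) (simp_all add: dvd_imp_le)

lemma group_mGT:
  assumes "0 < q"
  shows "group (mGT q)"
proof -
  have "mGT_gens q \<subseteq> carrier (BijGroup {..<q})"
    using mGT_gens_subset_compatible_perms[of q q] assms
    by (auto simp: compatible_perms_def BijGroup_def)
  then have "subgroup (generate (BijGroup {..<q}) (mGT_gens q)) (BijGroup {..<q})"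
    by (rule group.generate_is_subgroup[OF group_BijGroup])
  then show ?thesis
    unfolding mGT_def by (rule subgroup.subgroup_is_group[OF _ group_BijGroup])
qed

lemma induced_perm_mGT:
  assumes "p dvd q" "0 < p" "0 < q"
  shows "induced_perm p ` carrier (mGT q) \<subseteq> carrier (mGT p)"
proof -
  have "p \<le> q" using assms by (simp add: dvd_imp_le)
  then have sub: "subgroup (compatible_perms q p) (BijGroup {..<q})"
    using assms(2) by (intro subgroup_compatible_perms)
  interpret C: group_hom "(BijGroup {..<q})\<lparr>carrier := compatible_perms q p\<rparr>" "BijGroup {..<p}"
    "induced_perm p"
    using subgroup.subgroup_is_group[OF sub group_BijGroup] group_BijGroup
      induced_perm_hom[OF assms(2) \<open>p \<le> q\<close>]
    by (simp add: group_hom_def group_hom_axioms_def)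
  have gens: "mGT_gens q \<subseteq> compatible_perms q p"
    using assms by (rule mGT_gens_subset_compatible_perms)
  have "induced_perm p ` carrier (mGT q)
      = induced_perm p ` generate ((BijGroup {..<q})\<lparr>carrier := compatible_perms q p\<rparr>) (mGT_gens q)"
    by (simp add: carrier_mGT group.generate_consistent[OF group_BijGroup gens sub])
  also have "\<dots> = generate (BijGroup {..<p}) (induced_perm p ` mGT_gens q)"
    using gens by (simp add: C.generate_img)
  also have "\<dots> \<subseteq> carrier (mGT p)"
    unfolding carrier_mGT
    using assms by (intro group.mono_generate[OF group_BijGroup] induced_perm_mGT_gens)
  finally show ?thesis .
qed

lemma u_mGT:
  assumes "g \<in> carrier (mGT q)" "p dvd q" "0 < p" "0 < q"
  shows "u q p g = induced_perm p g"
    and "\<exists>!h. h \<in> Bij {..<p} \<and> (\<forall>a<q. g a mod p = h (a mod p))"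
  using assms mGT_subset_compatible_perms[OF assms(2-4)] u_eq_induced_perm[of g q p]
  by (auto simp: dvd_imp_le)

lemma u_hom:
  assumes "p dvd q" "0 < p" "0 < q"
  shows "u q p \<in> hom (mGT q) (mGT p)"
proof (rule homI)
  fix g assume "g \<in> carrier (mGT q)"
  then show "u q p g \<in> carrier (mGT p)"
    using induced_perm_mGT[OF assms] u_mGT[OF _ assms] by blast
next
  fix f g assume fg: "f \<in> carrier (mGT q)" "g \<in> carrier (mGT q)"
  then have "f \<otimes>\<^bsub>mGT q\<^esub> g \<in> carrier (mGT q)"
    using assms(3) by (simp add: group_mGT group.is_monoid monoid.m_closed)
  then show "u q p (f \<otimes>\<^bsub>mGT q\<^esub> g) = u q p f \<otimes>\<^bsub>mGT p\<^esub> u q p g"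
    using fg mGT_subset_compatible_perms[OF assms] induced_perm_hom[of p q] assms
    by (auto simp: u_mGT mult_mGT hom_def dvd_imp_le)
qed

definition compatible_families ::
  "'i set \<Rightarrow> ('i \<Rightarrow> 'i \<Rightarrow> bool) \<Rightarrow> ('i \<Rightarrow> ('a, 'b) monoid_scheme) \<Rightarrow> ('i \<Rightarrow> 'i \<Rightarrow> 'a \<Rightarrow> 'a)
    \<Rightarrow> ('i \<Rightarrow> 'a) set" where
  "compatible_families I R G \<phi> =
     {f \<in> carrier (product_group I G). \<forall>i\<in>I. \<forall>j\<in>I. R i j \<longrightarrow> \<phi> i j (f i) = f j}"

definition inverse_limit ::
  "'i set \<Rightarrow> ('i \<Rightarrow> 'i \<Rightarrow> bool) \<Rightarrow> ('i \<Rightarrow> ('a, 'b) monoid_scheme) \<Rightarrow> ('i \<Rightarrow> 'i \<Rightarrow> 'a \<Rightarrow> 'a)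
    \<Rightarrow> ('i \<Rightarrow> 'a) monoid" where
  "inverse_limit I R G \<phi> = (product_group I G)\<lparr>carrier := compatible_families I R G \<phi>\<rparr>"

lemma subgroup_compatible_families:
  assumes groups: "\<And>i. i \<in> I \<Longrightarrow> group (G i)"
    and homs: "\<And>i j. i \<in> I \<Longrightarrow> j \<in> I \<Longrightarrow> R i j \<Longrightarrow> \<phi> i j \<in> hom (G i) (G j)"
  shows "subgroup (compatible_families I R G \<phi>) (product_group I G)"
proof -
  interpret P: group "product_group I G" using groups by simp
  have hom: "group_hom (G i) (G j) (\<phi> i j)" if "i \<in> I" "j \<in> I" "R i j" for i j
    using that groups homs by (simp add: group_hom_def group_hom_axioms_def)
  show ?thesis
  proof (rule P.subgroupI)
    have "\<one>\<^bsub>product_group I G\<^esub> \<in> compatible_families I R G \<phi>"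
      by (auto simp: compatible_families_def hom group_hom.hom_one groups group.is_monoid)
    then show "compatible_families I R G \<phi> \<noteq> {}" by blast
  next
    fix f assume "f \<in> compatible_families I R G \<phi>"
    then show "inv\<^bsub>product_group I G\<^esub> f \<in> compatible_families I R G \<phi>"
      using groups P.inv_closed
      by (auto simp: compatible_families_def PiE_iff group_hom.hom_inv[OF hom])
  next
    fix f g assume "f \<in> compatible_families I R G \<phi>" "g \<in> compatible_families I R G \<phi>"
    then show "f \<otimes>\<^bsub>product_group I G\<^esub> g \<in> compatible_families I R G \<phi>"
      using P.m_closed
      by (auto simp: compatible_families_def PiE_iff group_hom.hom_mult[OF hom])
  qed (auto simp: compatible_families_def)
qed

lemma group_inverse_limit:
  assumes "\<And>i. i \<in> I \<Longrightarrow> group (G i)"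
    and "\<And>i j. i \<in> I \<Longrightarrow> j \<in> I \<Longrightarrow> R i j \<Longrightarrow> \<phi> i j \<in> hom (G i) (G j)"
  shows "group (inverse_limit I R G \<phi>)"
  unfolding inverse_limit_def
  using subgroup_compatible_families[OF assms] product_group[OF assms(1)]
  by (rule subgroup.subgroup_is_group)

lemma mGT_lim_eq_inverse_limit: "mGT_lim = inverse_limit {q. 3 \<le> q} (\<lambda>q p. p dvd q) mGT u"
  by (auto simp: mGT_lim_def mGT_lim_carrier_def inverse_limit_def compatible_families_def
      product_group_def PiE_iff restrict_def extensional_def)

theorem corollary6p4:
  shows "(\<forall>q p. 3 \<le> p \<and> 3 \<le> q \<and> p dvd q \<longrightarrow>
            (\<forall>g \<in> carrier (mGT q). \<exists>!h. h \<in> Bij {..<p} \<and> (\<forall>a<q. g a mod p = h (a mod p)))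
          \<and> u q p \<in> hom (mGT q) (mGT p))
       \<and> (\<forall>q. 3 \<le> q \<longrightarrow> (\<forall>g \<in> carrier (mGT q). u q q g = g))
       \<and> (\<forall>q p r. 3 \<le> r \<and> 3 \<le> p \<and> 3 \<le> q \<and> r dvd p \<and> p dvd q \<longrightarrow>
            (\<forall>g \<in> carrier (mGT q). u p r (u q p g) = u q r g))
       \<and> group mGT_lim"
proof (intro conjI allI impI ballI)
  fix q p :: nat and g assume "3 \<le> p \<and> 3 \<le> q \<and> p dvd q" "g \<in> carrier (mGT q)"
  then show "\<exists>!h. h \<in> Bij {..<p} \<and> (\<forall>a<q. g a mod p = h (a mod p))"
    by (intro u_mGT(2)) auto
next
  fix q p :: nat assume "3 \<le> p \<and> 3 \<le> q \<and> p dvd q"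
  then show "u q p \<in> hom (mGT q) (mGT p)" by (intro u_hom) auto
next
  fix q :: nat and g assume q: "3 \<le> q" and g: "g \<in> carrier (mGT q)"
  then have "g \<in> Bij {..<q}"
    using mGT_subset_compatible_perms[of q q] by (auto simp: compatible_perms_def)
  with q g show "u q q g = g" by (simp add: u_mGT(1) induced_perm_self)
next
  fix q p r :: nat and g assume qpr: "3 \<le> r \<and> 3 \<le> p \<and> 3 \<le> q \<and> r dvd p \<and> p dvd q"
    and g: "g \<in> carrier (mGT q)"
  then have "u q p g \<in> carrier (mGT p)" using u_hom[of p q] by (auto simp: hom_def)
  then have "u p r (u q p g) = induced_perm r (induced_perm p g)"
    using qpr g by (simp add: u_mGT(1))
  also have "\<dots> = u q r g"
    using qpr g dvd_trans[of r p q] by (simp add: induced_perm_induced_perm u_mGT(1))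
  finally show "u p r (u q p g) = u q r g" .
next
  show "group mGT_lim"
    unfolding mGT_lim_eq_inverse_limit by (intro group_inverse_limit group_mGT u_hom) auto
qed

end
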